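(* Let $c\in\mathbb{R}$ with $0<c<1$. Then for every $s\in\mathbb{C}$, $$\eta(s)=\frac{1}{2}\int_{-\infty}^{\infty}\frac{(c+it)^{-s}}{\sin\big(\pi(c+it)\big)}\,dt .$$
   Context: $\eta(s)$ is Dirichlet's eta (alternating zeta) function, $\eta(s)=-\sum_{k\ge1}(-1)^k k^{-s}$ for $\operatorname{Re}s>0$, extended to an entire function; equivalently $\eta(s)=(1-2^{1-s})\zeta(s)$. Powers $(c+it)^{-s}$ use the principal branch. *)

theory Defs
  imports "HOL-Complex_Analysis.Complex_Analysis"
begin

definition eta :: "complex \<Rightarrow> complex" where
  "eta = (THE f. f holomorphic_on UNIV \<and>
            (\<forall>s. 0 < Re s \<longrightarrow>
               (\<lambda>n. (-1) ^ n * of_nat (Suc n) powr (- s)) sums f s))"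

end

theory Submission
  imports Defs "HOL-Real_Asymp.Real_Asymp"
begin

(* The integrand z powr (-s) / sin (pi z) is holomorphic on Re z > 0 apart from simple poles at the
   positive integers n, with residues (-1)^n n^(-s) / pi.  The residue theorem on the rectangles
   [c, N + 1/2] x [-T, T], with T \<rightarrow> \<infinity> (the horizontal sides vanish since |sin (pi z)| grows like
   exp (pi |Im z|)), shows that the integrals over the vertical lines Re z = N + 1/2 and Re z = c
   differ by 2 \<Sum>n\<le>N. (-1)^n n^(-s).  For Re s > 0 the integral over Re z = N + 1/2 tends to 0 as
   N \<rightarrow> \<infinity>, so half the integral over Re z = c is the sum of the eta series.  Exponential decay in t,
   locally uniform in s, makes that integral an entire function of s, which therefore is eta. *)

lemma norm_sin_ge_Re:
  fixes z :: complex
  shows "\<bar>sin (Re z)\<bar> * exp \<bar>Im z\<bar> / 2 \<le> norm (sin z)"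
proof -
  have "\<bar>sin (Re z)\<bar> * exp \<bar>Im z\<bar> / 2 \<le> \<bar>sin (Re z)\<bar> * (exp (Im z) + exp (- Im z)) / 2"
    by (intro divide_right_mono mult_left_mono) (auto simp: abs_if add_increasing add_increasing2)
  also have "\<dots> = \<bar>Re (sin z)\<bar>"
    by (simp add: Re_sin abs_mult add_pos_pos)
  also have "\<dots> \<le> norm (sin z)" by (rule abs_Re_le_cmod)
  finally show ?thesis .
qed

lemma norm_sin_ge_Im:
  fixes z :: complex
  shows "(exp \<bar>Im z\<bar> - exp (- \<bar>Im z\<bar>)) / 2 \<le> norm (sin z)"
proof -
  define C where "C = (exp (Im z) + exp (- Im z)) / 2"
  define S where "S = (exp (Im z) - exp (- Im z)) / 2"
  have "C\<^sup>2 = S\<^sup>2 + 1"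
    by (simp add: C_def S_def power2_eq_square field_simps exp_minus)
  moreover have "(norm (sin z))\<^sup>2 = (sin (Re z))\<^sup>2 * C\<^sup>2 + (cos (Re z))\<^sup>2 * S\<^sup>2"
    by (simp add: cmod_power2 Re_sin Im_sin C_def S_def power_mult_distrib power_divide)
  ultimately have "(norm (sin z))\<^sup>2 = S\<^sup>2 + (sin (Re z))\<^sup>2"
    using sin_cos_squared_add[of "Re z"] by algebra
  moreover have "S\<^sup>2 = ((exp \<bar>Im z\<bar> - exp (- \<bar>Im z\<bar>)) / 2)\<^sup>2"
    by (cases "0 \<le> Im z") (simp_all add: S_def power_divide power2_commute)
  ultimately have "((exp \<bar>Im z\<bar> - exp (- \<bar>Im z\<bar>)) / 2)\<^sup>2 \<le> (norm (sin z))\<^sup>2"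
    by simp
  thus ?thesis
    using abs_le_square_iff[of "(exp \<bar>Im z\<bar> - exp (- \<bar>Im z\<bar>)) / 2" "norm (sin z)"] by auto
qed

lemma norm_powr_neg_le:
  fixes z s :: complex
  assumes "0 \<le> Re z"
  shows "norm (z powr (-s)) \<le> norm z powr (- Re s) * exp (\<bar>Im s\<bar> * (pi / 2))"
proof -
  have "Im s * Arg z \<le> \<bar>Im s\<bar> * \<bar>Arg z\<bar>" by (metis abs_ge_self abs_mult)
  also have "\<dots> \<le> \<bar>Im s\<bar> * (pi / 2)"
    using Arg_Re_nonneg[THEN iffD2, OF assms] by (intro mult_left_mono) auto
  finally have "exp (Im s * Arg z) \<le> exp (\<bar>Im s\<bar> * (pi / 2))" by simp
  thus ?thesis by (simp add: norm_powr_complex mult_left_mono)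
qed

lemma powr_le_exp_half:
  fixes u R :: real
  assumes "0 < u" "0 \<le> R"
  shows "u powr R \<le> (2 * R + 1) powr R * exp (u / 2)"
proof -
  have "ln (u / (2 * R + 1)) \<le> u / (2 * R + 1) - 1"
    using assms by (intro ln_le_minus_one) simp
  hence "ln u \<le> u / (2 * R + 1) + ln (2 * R + 1)"
    using assms by (simp add: ln_div)
  hence "R * ln u \<le> R * (u / (2 * R + 1)) + R * ln (2 * R + 1)"
    using assms by (metis distrib_left mult_left_mono)
  moreover have "R * (u / (2 * R + 1)) \<le> u / 2"
    using assms by (simp add: field_simps)
  ultimately have "R * ln u \<le> R * ln (2 * R + 1) + u / 2" by linarith
  hence "exp (R * ln u) \<le> exp (R * ln (2 * R + 1) + u / 2)" by simp
  thus ?thesis using assms by (simp add: powr_def exp_add)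
qed

lemma powr_le_powr_neg_add_powr:
  fixes a u \<sigma> R :: real
  assumes "0 < a" "a \<le> u" "\<bar>\<sigma>\<bar> \<le> R"
  shows "u powr \<sigma> \<le> a powr (- R) + u powr R"
proof (cases "1 \<le> u")
  case True
  hence "u powr \<sigma> \<le> u powr R" using assms by (intro powr_mono) auto
  thus ?thesis by (smt (verit) powr_ge_zero)
next
  case False
  hence "u powr \<sigma> \<le> u powr (- R)" using assms by (intro powr_mono') auto
  also have "\<dots> \<le> a powr (- R)" using assms by (intro powr_mono2') auto
  finally show ?thesis by (smt (verit) powr_ge_zero)
qed

lemma integrable_exp_neg_abs: "(\<lambda>t::real. exp (- \<bar>t\<bar>)) integrable_on UNIV"
proof -
  have "(\<lambda>t::real. exp (- 1 * t)) integrable_on {0..}"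
    by (rule integrable_on_exp_minus_to_infinity) simp
  hence pos: "(\<lambda>t::real. exp (- \<bar>t\<bar>)) integrable_on {0..}"
    by (rule integrable_eq) simp
  hence "(\<lambda>t::real. exp (- \<bar>- t\<bar>)) absolutely_integrable_on {0..}"
    by (simp add: nonnegative_absolutely_integrable_1)
  hence "(\<lambda>t::real. exp (- \<bar>t\<bar>)) absolutely_integrable_on {..0}"
    using has_absolute_integral_reflect_real[of "{0..}" "{..0::real}" "\<lambda>t. exp (- \<bar>t\<bar>)"]
    by (auto simp: image_iff)
  hence neg: "(\<lambda>t::real. exp (- \<bar>t\<bar>)) integrable_on {..0}"
    using absolutely_integrable_on_def by blast
  have "(\<lambda>t::real. exp (- \<bar>t\<bar>)) integrable_on ({..0} \<union> {0..})"
    by (rule integrable_Un[OF _ neg pos]) (auto intro: negligible_subset[of "{0}"])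
  moreover have "{..0::real} \<union> {0..} = UNIV" by auto
  ultimately show ?thesis by simp
qed

lemma continuous_bounded_by_integrable_imp_integrable:
  fixes f :: "'a::euclidean_space \<Rightarrow> 'b::euclidean_space"
  assumes "continuous_on UNIV f" "h integrable_on UNIV" "\<And>t. norm (f t) \<le> h t"
  shows "f integrable_on UNIV"
  using assms continuous_imp_measurable_on_sets_lebesgue[OF assms(1)]
  by (intro measurable_bounded_by_integrable_imp_integrable[of f UNIV h]) auto

lemma integral_symmetric_interval_tendsto:
  fixes f :: "real \<Rightarrow> 'a::banach"
  assumes "f integrable_on UNIV"
  shows "((\<lambda>T. integral {-T..T} f) \<longlongrightarrow> integral UNIV f) at_top"
proof (rule tendstoI)
  fix e :: real assume "0 < e"
  have unbounded: "\<nexists>a b. (UNIV :: real set) = cbox a b"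
    by (metis bounded_cbox not_bounded_UNIV)
  obtain B where "0 < B" and B: "\<forall>a b. ball 0 B \<subseteq> cbox a b \<longrightarrow>
      (\<exists>z. ((\<lambda>x. if x \<in> UNIV then f x else 0) has_integral z) (cbox a b) \<and>
           norm (z - integral UNIV f) < e)"
    by (rule has_integral_altD[OF integrable_integral[OF assms] unbounded \<open>0 < e\<close>])
  show "\<forall>\<^sub>F T in at_top. dist (integral {-T..T} f) (integral UNIV f) < e"
    using eventually_ge_at_top[of B]
  proof eventually_elim
    case (elim T)
    hence "ball 0 B \<subseteq> cbox (-T) T" by (auto simp: cbox_interval)
    then obtain z where "(f has_integral z) {-T..T}" "norm (z - integral UNIV f) < e"
      using B[rule_format, of "-T" T] by (auto simp: cbox_interval)
    thus ?case by (simp add: integral_unique dist_norm)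
  qed
qed

lemma norm_integral_UNIV_diff_interval_le:
  fixes f :: "real \<Rightarrow> 'a::euclidean_space"
  assumes f: "f integrable_on UNIV" and h: "h integrable_on UNIV"
    and bound: "\<And>t. t \<notin> {a..b} \<Longrightarrow> norm (f t) \<le> h t"
  shows "norm (integral UNIV f - integral {a..b} f) \<le> integral UNIV h - integral {a..b} h"
proof -
  have outside_integral:
      "integral UNIV g - integral {a..b} g = integral UNIV (\<lambda>t. if t \<in> {a..b} then 0 else g t)"
    and outside_integrable: "(\<lambda>t. if t \<in> {a..b} then 0 else g t) integrable_on UNIV"
    if g: "g integrable_on UNIV" for g :: "real \<Rightarrow> 'b::euclidean_space"
  proof -
    define G where "G t = (if t \<in> {a..b} then g t else 0)" for t
    have G: "G integrable_on UNIV" "integral UNIV G = integral {a..b} g"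
      unfolding G_def integrable_restrict_UNIV integral_restrict_UNIV
      by (rule integrable_on_subinterval[OF g]) auto
    have "(\<lambda>t. if t \<in> {a..b} then 0 else g t) = (\<lambda>t. g t - G t)"
      by (auto simp: G_def)
    with integral_diff[OF g G(1)] integrable_diff[OF g G(1)] G(2)
    show "integral UNIV g - integral {a..b} g = integral UNIV (\<lambda>t. if t \<in> {a..b} then 0 else g t)"
      and "(\<lambda>t. if t \<in> {a..b} then 0 else g t) integrable_on UNIV"
      by simp_all
  qed
  show ?thesis
    unfolding outside_integral[OF f] outside_integral[OF h]
    using outside_integrable[OF f] outside_integrable[OF h]
    by (intro integral_norm_bound_integral) (auto simp: bound)
qed

lemma uniform_limit_integral_symmetric_interval:
  fixes f :: "'a \<Rightarrow> real \<Rightarrow> 'b::euclidean_space"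
  assumes h: "h integrable_on UNIV"
    and integrable: "\<And>s. s \<in> S \<Longrightarrow> f s integrable_on UNIV"
    and bound: "\<And>s t. s \<in> S \<Longrightarrow> norm (f s t) \<le> h t"
  shows "uniform_limit S (\<lambda>T s. integral {-T..T} (f s)) (\<lambda>s. integral UNIV (f s)) at_top"
  unfolding uniform_limit_iff
proof (intro allI impI)
  fix e :: real assume "0 < e"
  have "((\<lambda>T. integral UNIV h - integral {-T..T} h) \<longlongrightarrow> 0) at_top"
    using tendsto_diff[OF tendsto_const[of "integral UNIV h"]
        integral_symmetric_interval_tendsto[OF h]]
    by simp
  hence "\<forall>\<^sub>F T in at_top. integral UNIV h - integral {-T..T} h < e"
    using \<open>0 < e\<close> by (simp add: order_tendstoD)
  thus "\<forall>\<^sub>F T in at_top. \<forall>s\<in>S. dist (integral {-T..T} (f s)) (integral UNIV (f s)) < e"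
  proof eventually_elim
    case (elim T)
    show ?case
    proof
      fix s assume "s \<in> S"
      hence "norm (integral UNIV (f s) - integral {-T..T} (f s))
               \<le> integral UNIV h - integral {-T..T} h"
        by (intro norm_integral_UNIV_diff_interval_le integrable h bound)
      with elim show "dist (integral {-T..T} (f s)) (integral UNIV (f s)) < e"
        by (simp add: dist_norm norm_minus_commute)
    qed
  qed
qed

lemma holomorphic_on_parametric_integral_UNIV:
  fixes f f' :: "complex \<Rightarrow> real \<Rightarrow> complex"
  assumes deriv: "\<And>s t. ((\<lambda>s. f s t) has_field_derivative f' s t) (at s)"
    and cont: "\<And>s. continuous_on UNIV (f s)"
    and cont_deriv: "continuous_on UNIV (\<lambda>(s, t). f' s t)"
    and dominated: "\<And>r. \<exists>h. h integrable_on UNIV \<and> (\<forall>s\<in>cball 0 r. \<forall>t. norm (f s t) \<le> h t)"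
  shows "(\<lambda>s. integral UNIV (f s)) holomorphic_on UNIV"
proof -
  define L where "L s = integral UNIV (f s)" for s
  define F where "F T s = integral {-T..T} (f s)" for T s
  have "L holomorphic_on ball 0 r" for r
  proof -
    obtain h where h: "h integrable_on UNIV"
      and bound: "\<And>s t. s \<in> cball 0 r \<Longrightarrow> norm (f s t) \<le> h t"
      using dominated[of r] by blast
    have "F T holomorphic_on UNIV" for T
      unfolding F_def[abs_def] cbox_interval[symmetric]
      using cont cont_deriv
      by (intro leibniz_rule_holomorphic[where fx=f'] integrable_continuous)
         (auto intro: has_field_derivative_at_within deriv continuous_on_subset)
    hence "\<forall>\<^sub>F T in at_top. continuous_on (cball 0 r) (F T) \<and> F T holomorphic_on ball 0 r"
      by (intro always_eventually allI conjI)
        (auto intro: holomorphic_on_subset[of _ UNIV] holomorphic_on_imp_continuous_on)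
    moreover have "uniform_limit (cball 0 r) F L at_top"
      unfolding F_def[abs_def] L_def[abs_def] using h bound
      by (intro uniform_limit_integral_symmetric_interval
          continuous_bounded_by_integrable_imp_integrable[OF cont h])
    ultimately show ?thesis
      by (rule holomorphic_uniform_limit) auto
  qed
  hence "L holomorphic_on (\<Union>r\<in>UNIV. ball 0 r)"
    by (intro holomorphic_on_UN_open) auto
  moreover have "(\<Union>r\<in>UNIV. ball 0 r) = (UNIV :: complex set)"
    by (auto intro: gt_ex)
  ultimately show ?thesis by (simp add: L_def[abs_def])
qed

lemma contour_integral_rectpath_sides:
  fixes f :: "complex \<Rightarrow> complex" and a b c d :: real
  assumes "c < d" and cont: "continuous_on (path_image (rectpath (Complex a c) (Complex b d))) f"
  shows "contour_integral (rectpath (Complex a c) (Complex b d)) f =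
           contour_integral (linepath (Complex a c) (Complex b c)) f
         + \<i> * integral {c..d} (\<lambda>t. f (of_real b + \<i> * of_real t))
         + contour_integral (linepath (Complex b d) (Complex a d)) f
         - \<i> * integral {c..d} (\<lambda>t. f (of_real a + \<i> * of_real t))"
proof -
  define z1 z2 z3 z4 where z1_def: "z1 = Complex a c" and z2_def: "z2 = Complex b c"
    and z3_def: "z3 = Complex b d" and z4_def: "z4 = Complex a d"
  have rect:
      "rectpath z1 z3 = linepath z1 z2 +++ linepath z2 z3 +++ linepath z3 z4 +++ linepath z4 z1"
    by (simp add: rectpath_def Let_def z1_def z2_def z3_def z4_def)
  have "path_image (rectpath z1 z3) =
        closed_segment z1 z2 \<union> closed_segment z2 z3 \<union> closed_segment z3 z4 \<union> closed_segment z4 z1"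
    unfolding rect by (simp add: path_image_join Un_assoc)
  hence "continuous_on (closed_segment z1 z2) f" "continuous_on (closed_segment z2 z3) f"
        "continuous_on (closed_segment z3 z4) f" "continuous_on (closed_segment z4 z1) f"
    using cont unfolding z1_def z3_def by (auto elim: continuous_on_subset)
  note segments = this[THEN contour_integrable_continuous_linepath]
  have "contour_integral (rectpath z1 z3) f =
        contour_integral (linepath z1 z2) f + contour_integral (linepath z2 z3) f +
        contour_integral (linepath z3 z4) f - contour_integral (linepath z1 z4) f"
    unfolding rect
    using contour_integral_reverse_linepath[OF \<open>continuous_on (closed_segment z4 z1) f\<close>]
    by (simp add: segments contour_integrable_joinI valid_path_join)
  moreover have "contour_integral (linepath z2 z3) f = \<i> * integral {c..d} (\<lambda>t. f (Complex b t))"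
    and "contour_integral (linepath z1 z4) f = \<i> * integral {c..d} (\<lambda>t. f (Complex a t))"
    using \<open>c < d\<close>
    by (auto simp: z1_def z2_def z3_def z4_def intro!: contour_integral_linepath_same_Re)
  ultimately show ?thesis
    by (simp add: z1_def z2_def z3_def z4_def Complex_eq)
qed

definition eta_kernel :: "complex \<Rightarrow> complex \<Rightarrow> complex" where
  "eta_kernel s z = z powr (- s) / sin (of_real pi * z)"

lemma sin_pi_times_eq_0_iff: "sin (of_real pi * w :: complex) = 0 \<longleftrightarrow> w \<in> \<int>"
proof
  assume "sin (of_real pi * w) = 0"
  then obtain n :: int where "of_real pi * w = of_real (n * pi)"
    by (auto simp: sin_eq_0)
  hence "w = of_int n" by (simp add: complex_eq_iff)
  thus "w \<in> \<int>" by simp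
next
  assume "w \<in> \<int>"
  then obtain n :: int where "w = of_int n" by (auto elim: Ints_cases)
  thus "sin (of_real pi * w) = 0"
    by (auto simp: sin_eq_0 intro!: exI[of _ n])
qed

lemma vertical_line_notin_Ints: "a \<notin> \<int> \<Longrightarrow> of_real a + \<i> * of_real t \<notin> (\<int> :: complex set)"
  by (auto elim!: Ints_cases simp: complex_eq_iff)

lemma notin_Ints_between_consecutive_nats:
  fixes x :: real
  assumes "real N < x" "x < real N + 1"
  shows "x \<notin> \<int>"
proof
  assume "x \<in> \<int>"
  then obtain m :: int where "x = of_int m" by (auto elim: Ints_cases)
  with assms have "int N < m" "m < int N + 1" by linarith+
  thus False by linarith
qed

lemma holomorphic_on_eta_kernel: "eta_kernel s holomorphic_on {z. 0 < Re z} - \<int>"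
  unfolding eta_kernel_def[abs_def]
  by (intro holomorphic_intros) (auto simp: sin_pi_times_eq_0_iff complex_nonpos_Reals_iff)

lemma continuous_on_eta_kernel_vertical:
  assumes "0 < a" "a \<notin> \<int>"
  shows "continuous_on UNIV (\<lambda>t. eta_kernel s (of_real a + \<i> * of_real t))"
  using assms vertical_line_notin_Ints
  by (intro continuous_on_compose2[OF
        holomorphic_on_imp_continuous_on[OF holomorphic_on_eta_kernel]])
     (auto intro!: continuous_intros)

(* Where sin (pi z) = 0 the kernel is the constant 0 in s, so no condition on z beyond z \<noteq> 0. *)
lemma eta_kernel_has_field_derivative:
  assumes "z \<noteq> 0"
  shows "((\<lambda>s. eta_kernel s z) has_field_derivative - Ln z * eta_kernel s z) (at s)"
proof (cases "sin (of_real pi * z) = 0")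
  case False
  have "(\<lambda>s. eta_kernel s z) = (\<lambda>s. exp (- s * Ln z) / sin (of_real pi * z))"
    using assms by (simp add: eta_kernel_def powr_def)
  thus ?thesis
    using assms False by (auto intro!: derivative_eq_intros simp: eta_kernel_def powr_def)
qed (simp add: eta_kernel_def)

lemma residue_eta_kernel:
  assumes "n \<ge> 1"
  shows "residue (eta_kernel s) (of_nat n) = (-1) ^ n * of_nat n powr (- s) / of_real pi"
proof -
  have cos_pi_n: "cos (of_real pi * of_nat n :: complex) = (-1) ^ n"
    by (simp flip: cos_of_real add: mult.commute)
  have "residue (\<lambda>w. w powr (- s) / sin (of_real pi * w)) (of_nat n) =
        of_nat n powr (- s) / (of_real pi * cos (of_real pi * of_nat n))"
  proof (rule residue_simple_pole_deriv[where s="{w. 0 < Re w}"])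
    show "(\<lambda>w. w powr - s) holomorphic_on {w. 0 < Re w}"
      by (intro holomorphic_intros) (auto simp: complex_nonpos_Reals_iff)
    show "((\<lambda>w. sin (of_real pi * w)) has_field_derivative
           of_real pi * cos (of_real pi * of_nat n)) (at (of_nat n))"
      by (auto intro!: derivative_eq_intros)
    show "sin (of_real pi * of_nat n :: complex) = 0"
      by (simp add: sin_pi_times_eq_0_iff)
  qed (use assms cos_pi_n in \<open>auto intro!: holomorphic_intros convex_connected
       simp: open_halfspace_Re_gt convex_halfspace_Re_gt powr_def\<close>)
  thus ?thesis
    by (cases "even n") (simp_all add: eta_kernel_def[abs_def] cos_pi_n)
qed

lemma contour_integral_rectpath_eta_kernel:
  assumes "0 < c" "c < 1" "c < b" "real N < b" "b < real N + 1" "0 < T"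
  shows "contour_integral (rectpath (Complex c (-T)) (Complex b T)) (eta_kernel s) =
         2 * \<i> * (\<Sum>n=1..N. (-1) ^ n * of_nat n powr (- s))"
proof -
  define z1 z3 where "z1 = Complex c (-T)" and "z3 = Complex b T"
  define S where "S = {w. 0 < Re w \<and> Re w < real N + 1}"
  define poles where "poles = (of_nat :: nat \<Rightarrow> complex) ` {1..N}"
  have corners: "Re z1 \<le> Re z3" "Im z1 \<le> Im z3"
    using assms by (auto simp: z1_def z3_def)
  have "cbox z1 z3 \<subseteq> S"
    using assms by (auto simp: in_cbox_complex_iff z1_def z3_def S_def)
  have poles_inside: "poles \<subseteq> box z1 z3"
    using assms by (auto simp: poles_def in_box_complex_iff z1_def z3_def)
  have "S \<inter> \<int> \<subseteq> poles"
  proof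
    fix w assume "w \<in> S \<inter> \<int>"
    then obtain m :: int where "w = of_int m" "0 < m" "m < int N + 1"
      by (auto simp: S_def elim!: Ints_cases)
    thus "w \<in> poles" unfolding poles_def
      by (intro image_eqI[of _ _ "nat m"]) auto
  qed
  hence "S - poles \<subseteq> {z. 0 < Re z} - \<int>" by (auto simp: S_def)
  moreover have "\<forall>z. z \<notin> S \<longrightarrow> winding_number (rectpath z1 z3) z = 0"
    using \<open>cbox z1 z3 \<subseteq> S\<close> winding_number_rectpath_outside[OF corners] by blast
  moreover have "path_image (rectpath z1 z3) \<subseteq> S - poles"
    using \<open>cbox z1 z3 \<subseteq> S\<close> poles_inside path_image_rectpath_cbox_minus_box[OF corners] by blast
  ultimately have "contour_integral (rectpath z1 z3) (eta_kernel s) =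
         2 * pi * \<i> * (\<Sum>p\<in>poles. winding_number (rectpath z1 z3) p * residue (eta_kernel s) p)"
    by (intro Residue_theorem[where S=S] holomorphic_on_subset[OF holomorphic_on_eta_kernel])
       (auto simp: S_def poles_def open_halfspace_Re_gt open_halfspace_Re_lt Collect_conj_eq
        intro!: open_Int convex_connected convex_Int convex_halfspace_Re_gt convex_halfspace_Re_lt)
  also have "(\<Sum>p\<in>poles. winding_number (rectpath z1 z3) p * residue (eta_kernel s) p) =
             (\<Sum>n=1..N. (-1) ^ n * of_nat n powr (- s) / of_real pi)"
    using poles_inside unfolding poles_def
    by (subst sum.reindex)
       (auto simp: inj_on_def image_subset_iff winding_number_rectpath residue_eta_kernel
             intro!: sum.cong)
  also have "2 * pi * \<i> * \<dots> = 2 * \<i> * (\<Sum>n=1..N. (-1) ^ n * of_nat n powr (- s))"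
    by (simp add: sum_distrib_left sum_divide_distrib mult.assoc)
  finally show ?thesis
    by (simp add: z1_def z3_def)
qed

lemma norm_eta_kernel_vertical_le:
  fixes a t :: real
  assumes "a \<notin> \<int>" "0 \<le> a"
  defines "z \<equiv> of_real a + \<i> * of_real t"
  shows "norm (eta_kernel s z) \<le>
         2 * exp (\<bar>Im s\<bar> * (pi / 2)) / \<bar>sin (pi * a)\<bar> * norm z powr (- Re s) * exp (- pi * \<bar>t\<bar>)"
proof -
  have "sin (pi * a) \<noteq> 0"
    using assms by (auto simp: sin_zero_iff_int2 mult.commute)
  moreover have "\<bar>sin (pi * a)\<bar> * exp (pi * \<bar>t\<bar>) / 2 \<le> norm (sin (of_real pi * z))"
    using norm_sin_ge_Re[of "of_real pi * z"] by (simp add: z_def abs_mult)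
  moreover have "norm (z powr (- s)) \<le> norm z powr (- Re s) * exp (\<bar>Im s\<bar> * (pi / 2))"
    using assms by (intro norm_powr_neg_le) (simp add: z_def)
  ultimately have "norm (eta_kernel s z) \<le>
      norm z powr (- Re s) * exp (\<bar>Im s\<bar> * (pi / 2)) / (\<bar>sin (pi * a)\<bar> * exp (pi * \<bar>t\<bar>) / 2)"
    unfolding eta_kernel_def norm_divide by (intro frac_le) auto
  thus ?thesis
    by (simp add: exp_minus field_simps)
qed

lemma norm_eta_kernel_horizontal_le:
  assumes "0 \<le> Re w" "Im w \<noteq> 0"
  shows "norm (eta_kernel s w) \<le>
         2 * exp (\<bar>Im s\<bar> * (pi / 2)) * norm w powr (- Re s)
           / (exp (pi * \<bar>Im w\<bar>) - exp (- pi * \<bar>Im w\<bar>))"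
proof -
  have "0 < exp (pi * \<bar>Im w\<bar>) - exp (- pi * \<bar>Im w\<bar>)"
    using assms by simp
  moreover have "(exp (pi * \<bar>Im w\<bar>) - exp (- pi * \<bar>Im w\<bar>)) / 2 \<le> norm (sin (of_real pi * w))"
    using norm_sin_ge_Im[of "of_real pi * w"] by (simp add: abs_mult)
  moreover have "norm (w powr (- s)) \<le> norm w powr (- Re s) * exp (\<bar>Im s\<bar> * (pi / 2))"
    using assms by (intro norm_powr_neg_le)
  ultimately have "norm (eta_kernel s w) \<le>
      norm w powr (- Re s) * exp (\<bar>Im s\<bar> * (pi / 2))
        / ((exp (pi * \<bar>Im w\<bar>) - exp (- pi * \<bar>Im w\<bar>)) / 2)"
    unfolding eta_kernel_def norm_divide by (intro frac_le) auto
  thus ?thesis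
    by (simp add: field_simps)
qed

lemma eta_kernel_vertical_dominated:
  fixes a r :: real
  assumes "0 < a" "a \<notin> \<int>"
  obtains C where "\<And>s t. norm s \<le> r \<Longrightarrow>
                     norm (eta_kernel s (of_real a + \<i> * of_real t)) \<le> C * exp (- \<bar>t\<bar>)"
proof -
  define R where "R = \<bar>r\<bar>"
  define K where "K = 2 * exp (R * (pi / 2)) / \<bar>sin (pi * a)\<bar>"
  define B where "B = (2 * R + 1) powr R * exp (a / 2)"
  have "0 \<le> K" "0 \<le> B" "0 \<le> R"
    by (simp_all add: K_def B_def R_def)
  have decay: "exp (- pi * \<bar>t\<bar>) \<le> exp (- \<bar>t\<bar>)" "exp (\<bar>t\<bar> / 2) * exp (- pi * \<bar>t\<bar>) \<le> exp (- \<bar>t\<bar>)"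
    for t :: real
  proof -
    have "3 / 2 * \<bar>t\<bar> \<le> pi * \<bar>t\<bar>"
      using pi_gt3 by (intro mult_right_mono) auto
    thus "exp (- pi * \<bar>t\<bar>) \<le> exp (- \<bar>t\<bar>)" "exp (\<bar>t\<bar> / 2) * exp (- pi * \<bar>t\<bar>) \<le> exp (- \<bar>t\<bar>)"
      by (simp_all flip: exp_add)
  qed
  show ?thesis
  proof (rule that[of "K * (a powr (- R) + B)"])
    fix s :: complex and t :: real
    assume "norm s \<le> r"
    hence s: "\<bar>Re s\<bar> \<le> R" "\<bar>Im s\<bar> \<le> R"
      using abs_Re_le_cmod[of s] abs_Im_le_cmod[of s] by (auto simp: R_def)
    define z where "z = of_real a + \<i> * of_real t"
    have "a \<le> norm z" "norm z \<le> a + \<bar>t\<bar>"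
      using abs_Re_le_cmod[of z] cmod_le[of z] assms by (auto simp: z_def)
    have "norm z powr (- Re s) \<le> a powr (- R) + norm z powr R"
      using s assms \<open>a \<le> norm z\<close> by (intro powr_le_powr_neg_add_powr) auto
    also have "norm z powr R \<le> (2 * R + 1) powr R * exp (norm z / 2)"
      using assms \<open>a \<le> norm z\<close> \<open>0 \<le> R\<close> by (intro powr_le_exp_half) auto
    also have "\<dots> \<le> B * exp (\<bar>t\<bar> / 2)"
      using \<open>norm z \<le> a + \<bar>t\<bar>\<close>
      by (simp add: B_def mult.assoc mult_left_mono flip: exp_add add_divide_distrib)
    finally have pow: "norm z powr (- Re s) \<le> a powr (- R) + B * exp (\<bar>t\<bar> / 2)"
      by simp
    have "norm (eta_kernel s z) \<le>
          2 * exp (\<bar>Im s\<bar> * (pi / 2)) / \<bar>sin (pi * a)\<bar> * norm z powr (- Re s) * exp (- pi * \<bar>t\<bar>)"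
      unfolding z_def using assms by (intro norm_eta_kernel_vertical_le) auto
    also have "\<dots> \<le> K * (a powr (- R) + B * exp (\<bar>t\<bar> / 2)) * exp (- pi * \<bar>t\<bar>)"
      using s pow unfolding K_def
      by (intro mult_right_mono mult_mono divide_right_mono) auto
    also have "\<dots> = K * (a powr (- R) * exp (- pi * \<bar>t\<bar>) + B * (exp (\<bar>t\<bar> / 2) * exp (- pi * \<bar>t\<bar>)))"
      by (simp add: algebra_simps)
    also have "\<dots> \<le> K * (a powr (- R) * exp (- \<bar>t\<bar>) + B * exp (- \<bar>t\<bar>))"
      using decay \<open>0 \<le> K\<close> \<open>0 \<le> B\<close> by (intro mult_left_mono add_mono) auto
    finally show "norm (eta_kernel s z) \<le> K * (a powr (- R) + B) * exp (- \<bar>t\<bar>)"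
      by (simp add: algebra_simps)
  qed
qed

definition eta_line_integral :: "real \<Rightarrow> complex \<Rightarrow> complex" where
  "eta_line_integral a s = integral UNIV (\<lambda>t. eta_kernel s (of_real a + \<i> * of_real t))"

lemma integrable_eta_kernel_vertical:
  assumes "0 < a" "a \<notin> \<int>"
  shows "(\<lambda>t. eta_kernel s (of_real a + \<i> * of_real t)) integrable_on UNIV"
proof -
  obtain C where bound: "\<And>t. norm (eta_kernel s (of_real a + \<i> * of_real t)) \<le> C * exp (- \<bar>t\<bar>)"
    by (rule eta_kernel_vertical_dominated[OF assms, of "norm s"]) auto
  have "(\<lambda>t. C * exp (- \<bar>t\<bar>)) integrable_on UNIV"
    using integrable_on_cmult_left[OF integrable_exp_neg_abs, of C] by simp
  thus ?thesis
    by (rule continuous_bounded_by_integrable_imp_integrable[OF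
          continuous_on_eta_kernel_vertical[OF assms] _ bound])
qed

lemma holomorphic_eta_line_integral:
  assumes "0 < a" "a \<notin> \<int>"
  shows "eta_line_integral a holomorphic_on UNIV"
  unfolding eta_line_integral_def[abs_def]
proof (rule holomorphic_on_parametric_integral_UNIV)
  define z where "z t = of_real a + \<i> * of_real t" for t
  have z: "z t \<noteq> 0" "z t \<notin> \<real>\<^sub>\<le>\<^sub>0" for t
    using assms by (auto simp: z_def complex_eq_iff complex_nonpos_Reals_iff)
  have "sin (of_real pi * z t) \<noteq> 0" for t
    unfolding sin_pi_times_eq_0_iff z_def using vertical_line_notin_Ints[OF assms(2)] .
  moreover have "continuous_on UNIV (\<lambda>x. z (snd x))"
    unfolding z_def by (intro continuous_intros)
  ultimately show "continuous_on UNIV (\<lambda>(s, t). - Ln (z t) * eta_kernel s (z t))"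
    unfolding eta_kernel_def case_prod_unfold using z
    by (intro continuous_intros) (auto simp: complex_nonpos_Reals_iff)
  show "((\<lambda>s. eta_kernel s (z t)) has_field_derivative - Ln (z t) * eta_kernel s (z t)) (at s)"
    for s t
    by (rule eta_kernel_has_field_derivative[OF z(1)])
  show "continuous_on UNIV (\<lambda>t. eta_kernel s (z t))" for s
    unfolding z_def using assms by (rule continuous_on_eta_kernel_vertical)
  show "\<exists>h. h integrable_on UNIV \<and> (\<forall>s\<in>cball 0 r. \<forall>t. norm (eta_kernel s (z t)) \<le> h t)" for r
  proof -
    obtain C where bound: "\<And>s t. norm s \<le> r \<Longrightarrow> norm (eta_kernel s (z t)) \<le> C * exp (- \<bar>t\<bar>)"
      unfolding z_def by (rule eta_kernel_vertical_dominated[OF assms, of r]) blast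
    have "(\<lambda>t. C * exp (- \<bar>t\<bar>)) integrable_on UNIV"
      using integrable_on_cmult_left[OF integrable_exp_neg_abs, of C] by simp
    with bound show ?thesis by auto
  qed
qed

lemma norm_contour_integral_eta_kernel_horizontal_le:
  fixes s :: complex and c b x1 x2 y :: real
  assumes "0 < c" "x1 \<in> {c..b}" "x2 \<in> {c..b}" "y \<noteq> 0"
  defines "R \<equiv> norm s"
  shows "norm (contour_integral (linepath (Complex x1 y) (Complex x2 y)) (eta_kernel s)) \<le>
         2 * exp (R * (pi / 2)) * (c powr (- R) + (b + \<bar>y\<bar>) powr R)
           / (exp (pi * \<bar>y\<bar>) - exp (- pi * \<bar>y\<bar>)) * \<bar>x2 - x1\<bar>"
proof -
  let ?M = "2 * exp (R * (pi / 2)) * (c powr (- R) + (b + \<bar>y\<bar>) powr R)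
              / (exp (pi * \<bar>y\<bar>) - exp (- pi * \<bar>y\<bar>))"
  have segment: "c \<le> Re w \<and> Re w \<le> b \<and> Im w = y"
    if "w \<in> closed_segment (Complex x1 y) (Complex x2 y)" for w
    using that assms
    by (auto simp: closed_segment_same_Im closed_segment_eq_real_ivl split: if_splits)
  have bound: "norm (eta_kernel s w) \<le> ?M"
    if "w \<in> closed_segment (Complex x1 y) (Complex x2 y)" for w
  proof -
    have w: "c \<le> Re w" "Re w \<le> b" "Im w = y" using segment[OF that] by auto
    have "c \<le> norm w" "norm w \<le> b + \<bar>y\<bar>"
      using w abs_Re_le_cmod[of w] cmod_le[of w] assms by auto
    have "norm w powr (- Re s) \<le> c powr (- R) + norm w powr R"
      using assms \<open>c \<le> norm w\<close> abs_Re_le_cmod[of s] by (intro powr_le_powr_neg_add_powr) auto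
    also have "norm w powr R \<le> (b + \<bar>y\<bar>) powr R"
      using \<open>norm w \<le> b + \<bar>y\<bar>\<close> by (simp add: R_def powr_mono2)
    finally have pow: "norm w powr (- Re s) \<le> c powr (- R) + (b + \<bar>y\<bar>) powr R"
      by simp
    have "norm (eta_kernel s w) \<le> 2 * exp (\<bar>Im s\<bar> * (pi / 2)) * norm w powr (- Re s)
            / (exp (pi * \<bar>Im w\<bar>) - exp (- pi * \<bar>Im w\<bar>))"
      using w assms by (intro norm_eta_kernel_horizontal_le) auto
    also have "\<dots> \<le> ?M"
      using pow abs_Im_le_cmod[of s] unfolding w(3) R_def
      by (intro divide_right_mono mult_mono) auto
    finally show ?thesis .
  qed
  have "continuous_on (closed_segment (Complex x1 y) (Complex x2 y)) (eta_kernel s)"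
    using segment assms
    by (intro holomorphic_on_imp_continuous_on holomorphic_on_subset[OF holomorphic_on_eta_kernel])
       (force elim!: Ints_cases)
  hence "norm (contour_integral (linepath (Complex x1 y) (Complex x2 y)) (eta_kernel s)) \<le>
         ?M * norm (Complex x2 y - Complex x1 y)"
    using bound order_trans[OF norm_ge_zero bound]
    by (intro contour_integral_bound_linepath contour_integrable_continuous_linepath) auto
  also have "norm (Complex x2 y - Complex x1 y) = \<bar>x2 - x1\<bar>"
    by (simp add: Complex_eq flip: of_real_diff)
  finally show ?thesis .
qed

lemma eta_kernel_horizontal_sides_tendsto_0:
  assumes "0 < c" "c \<le> b"
  shows "((\<lambda>T. contour_integral (linepath (Complex c (-T)) (Complex b (-T))) (eta_kernel s)
              + contour_integral (linepath (Complex b T) (Complex c T)) (eta_kernel s))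
          \<longlongrightarrow> 0) at_top"
proof (rule Lim_null_comparison)
  define R where "R = norm s"
  define M where "M T = 2 * exp (R * (pi / 2)) * (c powr (- R) + (b + T) powr R)
                          / (exp (pi * T) - exp (- pi * T)) * (b - c)" for T
  show "\<forall>\<^sub>F T in at_top.
          norm (contour_integral (linepath (Complex c (-T)) (Complex b (-T))) (eta_kernel s)
                + contour_integral (linepath (Complex b T) (Complex c T)) (eta_kernel s))
          \<le> M T + M T"
    using eventually_gt_at_top[of 0]
  proof eventually_elim
    case (elim T)
    have "norm (contour_integral (linepath (Complex c (-T)) (Complex b (-T))) (eta_kernel s)) \<le> M T"
      using norm_contour_integral_eta_kernel_horizontal_le[of c c b b "-T" s] elim assms
      by (simp add: M_def R_def)
    moreover have "norm (contour_integral (linepath (Complex b T) (Complex c T)) (eta_kernel s)) \<le> M T"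
      using norm_contour_integral_eta_kernel_horizontal_le[of c b b c T s] elim assms
      by (simp add: M_def R_def)
    ultimately show ?case
      by (intro norm_triangle_le add_mono)
  qed
  have "(M \<longlongrightarrow> 0) at_top"
    unfolding M_def using pi_gt3 by real_asymp
  from tendsto_add_zero[OF this this] show "((\<lambda>T. M T + M T) \<longlongrightarrow> 0) at_top" .
qed

lemma eta_line_integral_diff:
  assumes "0 < c" "c < 1" "c < b" "real N < b" "b < real N + 1"
  shows "eta_line_integral b s - eta_line_integral c s =
         2 * (\<Sum>n=1..N. (-1) ^ n * of_nat n powr (- s))"
proof -
  define S where "S = 2 * \<i> * (\<Sum>n=1..N. (-1) ^ n * of_nat n powr (- s))"
  define V where "V x T = integral {-T..T} (\<lambda>t. eta_kernel s (of_real x + \<i> * of_real t))" for x T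
  define H where "H T = contour_integral (linepath (Complex c (-T)) (Complex b (-T))) (eta_kernel s)
                      + contour_integral (linepath (Complex b T) (Complex c T)) (eta_kernel s)"
    for T
  have "c \<notin> \<int>" "b \<notin> \<int>"
    using assms notin_Ints_between_consecutive_nats[of 0 c]
      notin_Ints_between_consecutive_nats[of N b]
    by auto
  have rectangle: "S = H T + \<i> * V b T - \<i> * V c T" if "0 < T" for T
  proof -
    have "path_image (rectpath (Complex c (-T)) (Complex b T)) \<subseteq> {z. 0 < Re z} - \<int>"
      using assms \<open>0 < T\<close> \<open>c \<notin> \<int>\<close> \<open>b \<notin> \<int>\<close>
      by (subst path_image_rectpath) (auto elim!: Ints_cases)
    hence "continuous_on (path_image (rectpath (Complex c (-T)) (Complex b T))) (eta_kernel s)"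
      by (intro holomorphic_on_imp_continuous_on
          holomorphic_on_subset[OF holomorphic_on_eta_kernel])
    thus ?thesis
      using contour_integral_rectpath_sides[of "-T" T c b "eta_kernel s"]
        contour_integral_rectpath_eta_kernel[OF assms \<open>0 < T\<close>, of s] \<open>0 < T\<close>
      by (simp add: S_def H_def V_def)
  qed
  have "(V b \<longlongrightarrow> eta_line_integral b s) at_top" "(V c \<longlongrightarrow> eta_line_integral c s) at_top"
    unfolding V_def[abs_def] eta_line_integral_def using assms \<open>c \<notin> \<int>\<close> \<open>b \<notin> \<int>\<close>
    by (auto intro!: integral_symmetric_interval_tendsto integrable_eta_kernel_vertical)
  moreover have "(H \<longlongrightarrow> 0) at_top"
    unfolding H_def[abs_def] using assms by (intro eta_kernel_horizontal_sides_tendsto_0) auto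
  ultimately have "((\<lambda>T. H T + \<i> * V b T - \<i> * V c T) \<longlongrightarrow>
                    0 + \<i> * eta_line_integral b s - \<i> * eta_line_integral c s) at_top"
    by (intro tendsto_intros)
  moreover have "((\<lambda>T. H T + \<i> * V b T - \<i> * V c T) \<longlongrightarrow> S) at_top"
    using eventually_gt_at_top[of 0]
    by (rule tendsto_eventually[OF eventually_mono]) (simp add: rectangle)
  ultimately have "\<i> * (eta_line_integral b s - eta_line_integral c s) = S"
    using tendsto_unique by (force simp: algebra_simps)
  thus ?thesis
    by (simp add: S_def)
qed

lemma norm_eta_line_integral_le:
  assumes "0 < a" "a \<notin> \<int>" "0 \<le> Re s"
  shows "norm (eta_line_integral a s) \<le>
         2 * exp (\<bar>Im s\<bar> * (pi / 2)) / \<bar>sin (pi * a)\<bar> * a powr (- Re s)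
           * integral UNIV (\<lambda>t::real. exp (- \<bar>t\<bar>))"
proof -
  define K where "K = 2 * exp (\<bar>Im s\<bar> * (pi / 2)) / \<bar>sin (pi * a)\<bar> * a powr (- Re s)"
  have "norm (eta_kernel s (of_real a + \<i> * of_real t)) \<le> K * exp (- \<bar>t\<bar>)" for t
  proof -
    let ?z = "of_real a + \<i> * of_real t :: complex"
    have "a \<le> norm ?z"
      using abs_Re_le_cmod[of ?z] assms by simp
    hence "norm ?z powr (- Re s) \<le> a powr (- Re s)"
      using assms by (intro powr_mono2') auto
    moreover have "exp (- pi * \<bar>t\<bar>) \<le> exp (- \<bar>t\<bar>)"
      using pi_gt3 mult_right_mono[of 1 pi "\<bar>t\<bar>"] by simp
    ultimately have "2 * exp (\<bar>Im s\<bar> * (pi / 2)) / \<bar>sin (pi * a)\<bar> * norm ?z powr (- Re s)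
                       * exp (- pi * \<bar>t\<bar>) \<le> K * exp (- \<bar>t\<bar>)"
      unfolding K_def by (intro mult_mono mult_left_mono) auto
    thus ?thesis
      using norm_eta_kernel_vertical_le[of a s t] assms by simp
  qed
  hence "norm (eta_line_integral a s) \<le> integral UNIV (\<lambda>t. K * exp (- \<bar>t\<bar>))"
    unfolding eta_line_integral_def using integrable_on_cmult_left[OF integrable_exp_neg_abs, of K]
    by (intro integral_norm_bound_integral integrable_eta_kernel_vertical assms) simp_all
  thus ?thesis
    by (simp add: K_def)
qed

lemma eta_line_integral_half_integers_tendsto_0:
  assumes "0 < Re s"
  shows "(\<lambda>N. eta_line_integral (real N + 1 / 2) s) \<longlonglongrightarrow> 0"
proof (rule Lim_null_comparison)
  define K where "K = 2 * exp (\<bar>Im s\<bar> * (pi / 2)) * integral UNIV (\<lambda>t::real. exp (- \<bar>t\<bar>))"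
  have "\<bar>sin (pi * (real N + 1 / 2))\<bar> = 1" for N
  proof -
    have "sin (pi * (real N + 1 / 2)) = sin (real N * pi + pi / 2)" by (simp add: algebra_simps)
    thus ?thesis by (simp add: sin_add)
  qed
  thus "\<forall>\<^sub>F N in sequentially. norm (eta_line_integral (real N + 1 / 2) s) \<le>
                                K * (real N + 1 / 2) powr (- Re s)"
    using assms norm_eta_line_integral_le[of "real N + 1 / 2" s for N]
      notin_Ints_between_consecutive_nats[of _ "real N + 1 / 2" for N]
    by (auto simp: K_def mult_ac)
  show "(\<lambda>N. K * (real N + 1 / 2) powr (- Re s)) \<longlonglongrightarrow> 0"
    using assms by real_asymp
qed

lemma sums_eta_line_integral:
  assumes "0 < c" "c < 1" "0 < Re s"
  shows "(\<lambda>n. (-1) ^ n * of_nat (Suc n) powr (- s)) sums (eta_line_integral c s / 2)"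
proof -
  have shift: "(\<Sum>n<N. (-1) ^ n * of_nat (Suc n) powr (- s)) =
               - (\<Sum>n=1..N. (-1) ^ n * of_nat n powr (- s) :: complex)" for N
    by (induction N) (auto simp: sum.nat_ivl_Suc')
  have "\<forall>\<^sub>F N in sequentially. (eta_line_integral c s - eta_line_integral (real N + 1 / 2) s) / 2 =
                                (\<Sum>n<N. (-1) ^ n * of_nat (Suc n) powr (- s))"
    using eventually_ge_at_top[of 1]
  proof eventually_elim
    case (elim N)
    show ?case
      unfolding shift using eta_line_integral_diff[of c "real N + 1 / 2" N s] assms elim
      by (simp add: algebra_simps)
  qed
  moreover have "(\<lambda>N. (eta_line_integral c s - eta_line_integral (real N + 1 / 2) s) / 2)
                   \<longlonglongrightarrow> (eta_line_integral c s - 0) / 2"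
    using eta_line_integral_half_integers_tendsto_0[OF assms(3)] by (intro tendsto_intros) auto
  ultimately show ?thesis
    unfolding sums_def by (simp add: Lim_transform_eventually)
qed

lemma eta_eqI:
  assumes holo: "f holomorphic_on UNIV"
    and series: "\<And>s. 0 < Re s \<Longrightarrow> (\<lambda>n. (-1) ^ n * of_nat (Suc n) powr (- s)) sums f s"
  shows "eta = f"
  unfolding eta_def
proof (rule the_equality)
  fix g assume g: "g holomorphic_on UNIV \<and>
    (\<forall>s. 0 < Re s \<longrightarrow> (\<lambda>n. (-1) ^ n * of_nat (Suc n) powr (- s)) sums g s)"
  show "g = f"
  proof
    fix z
    show "g z = f z"
    proof (rule analytic_continuation_open[where s="{w. 0 < Re w}" and s'=UNIV and f=g and g=f])
      show "g w = f w" if "w \<in> {w. 0 < Re w}" for w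
        using g series that by (auto intro: sums_unique2)
    qed (use g holo in \<open>auto simp: open_halfspace_Re_gt intro: exI[of _ 1]\<close>)
  qed
qed (use assms in auto)

theorem mainTheorem2:
  fixes c :: real and s :: complex
  assumes "0 < c" and "c < 1"
  shows "(\<lambda>t::real. (of_real c + \<i> * of_real t) powr (- s)
                     / sin (of_real pi * (of_real c + \<i> * of_real t))) integrable_on UNIV
     \<and> eta s = 1/2 * integral UNIV (\<lambda>t::real. (of_real c + \<i> * of_real t) powr (- s)
                     / sin (of_real pi * (of_real c + \<i> * of_real t)))"
proof -
  have "c \<notin> \<int>"
    using notin_Ints_between_consecutive_nats[of 0 c] assms by simp
  have eta_eq: "eta = (\<lambda>s. eta_line_integral c s / 2)"
    using holomorphic_eta_line_integral[OF \<open>0 < c\<close> \<open>c \<notin> \<int>\<close>] sums_eta_line_integral[OF assms]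
    by (intro eta_eqI holomorphic_intros) auto
  have "eta s = 1/2 * eta_line_integral c s"
    using fun_cong[OF eta_eq, of s] by simp
  moreover have "(\<lambda>t. eta_kernel s (of_real c + \<i> * of_real t)) integrable_on UNIV"
    using integrable_eta_kernel_vertical[OF \<open>0 < c\<close> \<open>c \<notin> \<int>\<close>] .
  ultimately show ?thesis
    unfolding eta_line_integral_def eta_kernel_def by simp
qed

end
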